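(* Let $A$ be a formula and $\Gamma\{-\}$ a unary context. If the sequent $\Gamma\{[\Diamond A^\perp, A]\}$ is cut-free provable, then $\Gamma\{[A]\}$ is derivable in the calculus extended with those instances of (cut) whose cut formula is $A$, i.e. instances with premises $\Gamma'\{A\}$ and $\Gamma'\{A^\perp\}$ and conclusion $\Gamma'\{\}$.
   Context: Fix a countable set of atoms; each atom $\alpha$ has a dual negative atom $\alpha^\perp$. Formulas: $A,B ::= \alpha \mid \alpha^\perp \mid A\land B \mid A\lor B \mid \Box A \mid \Diamond A$. Negation $A^\perp$: $(\alpha)^\perp=\alpha^\perp$, $(\alpha^\perp)^\perp=\alpha$, $(A\land B)^\perp=A^\perp\lor B^\perp$, $(A\lor B)^\perp=A^\perp\land B^\perp$, $(\Box A)^\perp=\Diamond A^\perp$, $(\Diamond A)^\perp=\Box A^\perp$. A (nested) sequent is given by $\Gamma,\Delta ::= \cdot \mid \Gamma, A \mid \Gamma, [\Delta]$, where $\cdot$ is the empty sequent; sequents are taken up to exchange, and $\Gamma,\Delta$ denotes juxtaposition. A unary context is given by $\Gamma\{-\} ::= \Delta,\{-\} \mid \Delta,[\Gamma\{-\}]$; $\Gamma\{\Delta\}$ is the result of filling the hole with $\Delta$, and $\Gamma\{\}$ means $\Gamma\{\cdot\}$. Depth: $\mathrm{depth}(\Delta,\{-\})=0$, $\mathrm{depth}(\Delta,[\Gamma\{-\}])=\mathrm{depth}(\Gamma\{-\})+1$. Rules: (id) $\Gamma\{\alpha^\perp,\alpha\}$ with no premises ($\alpha$ an atom); ($\land$)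 from $\Gamma\{A\}$ and $\Gamma\{B\}$ infer $\Gamma\{A\land B\}$; ($\lor$) from $\Gamma\{A,B\}$ infer $\Gamma\{A\lor B\}$; ($\Box$) from $\Gamma\{[\Diamond A^\perp, A]\}$ infer $\Gamma\{\Box A\}$; ($\Diamond$) from $\Gamma\{\Delta\{A\},\Diamond A\}$ infer $\Gamma\{\Delta\{\},\Diamond A\}$, provided $\mathrm{depth}(\Delta\{-\})>0$; (cut) from $\Gamma\{A\}$ and $\Gamma\{A^\perp\}$ infer $\Gamma\{\}$. Cut-free provable = derivable using (id), ($\land$), ($\lor$), ($\Box$), ($\Diamond$) only. *)

theory Defs
  imports "HOL-Library.Multiset"
begin

type_synonym atom = nat

datatype fm = Atm atom | NAtm atom | And fm fm | Or fm fm | Box fm | Dia fm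

primrec neg :: "fm \<Rightarrow> fm" where
  "neg (Atm a) = NAtm a"
| "neg (NAtm a) = Atm a"
| "neg (And A B) = Or (neg A) (neg B)"
| "neg (Or A B) = And (neg A) (neg B)"
| "neg (Box A) = Dia (neg A)"
| "neg (Dia A) = Box (neg A)"

text \<open>A nested sequent, taken up to exchange: a multiset of formulas together
  with a multiset of bracketed (boxed) sub-sequents.\<close>
datatype seq = Seq "fm multiset" "seq multiset"

definition emp :: seq where "emp = Seq {#} {#}"

fun juxt :: "seq \<Rightarrow> seq \<Rightarrow> seq" (infixl "\<oplus>" 65) where
  "juxt (Seq fs bs) (Seq gs cs) = Seq (fs + gs) (bs + cs)"

definition fsq :: "fm \<Rightarrow> seq" where "fsq A = Seq {#A#} {#}"
definition bsq :: "seq \<Rightarrow> seq" where "bsq D = Seq {#} {#D#}"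

text \<open>Unary contexts: Hole D is D,{-}; Nest D C is D,[C{-}].\<close>
datatype ctx = Hole seq | Nest seq ctx

primrec fill :: "ctx \<Rightarrow> seq \<Rightarrow> seq" where
  "fill (Hole D) X = D \<oplus> X"
| "fill (Nest D C) X = D \<oplus> bsq (fill C X)"

primrec depth :: "ctx \<Rightarrow> nat" where
  "depth (Hole D) = 0"
| "depth (Nest D C) = Suc (depth C)"

inductive deriv :: "fm set \<Rightarrow> seq \<Rightarrow> bool" for Cs :: "fm set" where
  ax: "deriv Cs (fill G (fsq (NAtm a) \<oplus> fsq (Atm a)))"
| andR: "deriv Cs (fill G (fsq A)) \<Longrightarrow> deriv Cs (fill G (fsq B)) \<Longrightarrow> deriv Cs (fill G (fsq (And A B)))"
| orR: "deriv Cs (fill G (fsq A \<oplus> fsq B)) \<Longrightarrow> deriv Cs (fill G (fsq (Or A B)))"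
| boxR: "deriv Cs (fill G (bsq (fsq (Dia (neg A)) \<oplus> fsq A))) \<Longrightarrow> deriv Cs (fill G (fsq (Box A)))"
| diaR: "depth D > 0 \<Longrightarrow> deriv Cs (fill G (fill D (fsq A) \<oplus> fsq (Dia A)))
          \<Longrightarrow> deriv Cs (fill G (fill D emp \<oplus> fsq (Dia A)))"
| cut: "A \<in> Cs \<Longrightarrow> deriv Cs (fill G (fsq A)) \<Longrightarrow> deriv Cs (fill G (fsq (neg A)))
          \<Longrightarrow> deriv Cs (fill G emp)"

abbreviation cutfree :: "seq \<Rightarrow> bool" where "cutfree \<equiv> deriv {}"

end

theory Submission
  imports Defs
begin

(*
  The calculus without cut is sound for GL frames (transitive and conversely well-founded) and
  complete for the frames formed by finite trees under the descendant relation. On GL frames Loeb's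
  principle holds, so every model of Gamma{[<>~A, A]} is a model of Gamma{[A]}; hence Gamma{[A]} is
  even cut-free provable.

  For completeness, a sequent without cut-free proof is expanded node by node, from the root
  downwards, into a saturated tree on which it fails when atoms are made true exactly where their
  negations occur. All formulas stay in a finite Fischer-Ladner closure, and each bracket
  [<>~B, B] created by the box rule blocks []B below it for good, which makes the expansion
  terminate.
*)

section \<open>Sequents and contexts\<close>

lemma less_size_multiset_if_mem: "x \<in># M \<Longrightarrow> f x < Suc (size_multiset f M)"
proof -
  assume "x \<in># M"
  then obtain M' where "M = add_mset x M'" by (metis multi_member_split)
  then show ?thesis by simp
qed

lemma size_less_if_branch: "c \<in># bs \<Longrightarrow> size c < size (Seq fs bs)"
  by (simp add: less_size_multiset_if_mem)

primrec fmls :: "seq \<Rightarrow> fm multiset" where "fmls (Seq fs bs) = fs"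
primrec brs :: "seq \<Rightarrow> seq multiset" where "brs (Seq fs bs) = bs"

lemma fmls_juxt [simp]: "fmls (X \<oplus> Y) = fmls X + fmls Y"
  and brs_juxt [simp]: "brs (X \<oplus> Y) = brs X + brs Y"
  by (cases X; cases Y; simp)+

lemma juxt_assoc: "(X \<oplus> Y) \<oplus> Z = X \<oplus> (Y \<oplus> Z)"
  by (cases X; cases Y; cases Z) (simp add: ac_simps)

lemma juxt_emp [simp]: "X \<oplus> emp = X" "emp \<oplus> X = X"
  by (cases X; simp add: emp_def)+

primrec ctx_comp :: "ctx \<Rightarrow> ctx \<Rightarrow> ctx" where
  "ctx_comp (Hole D) H = (case H of Hole D' \<Rightarrow> Hole (D \<oplus> D') | Nest D' C \<Rightarrow> Nest (D \<oplus> D') C)"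
| "ctx_comp (Nest D C) H = Nest D (ctx_comp C H)"

lemma fill_ctx_comp: "fill (ctx_comp G H) Y = fill G (fill H Y)"
  by (induction G) (auto split: ctx.split simp: juxt_assoc)

lemma depth_ctx_comp: "depth (ctx_comp G H) = depth G + depth H"
  by (induction G) (auto split: ctx.split)

primrec anc :: "ctx \<Rightarrow> fm set" where
  "anc (Hole D) = {}"
| "anc (Nest D C) = set_mset (fmls D) \<union> anc C"

lemma finite_anc: "finite (anc G)"
  by (induction G) auto

lemma anc_ctx_comp_Nest: "anc G \<union> set_mset (fmls D) \<union> anc H \<subseteq> anc (ctx_comp G (Nest D H))"
  by (induction G) auto

lemma anc_decompose:
  "F \<in> anc G \<Longrightarrow> \<exists>G0 D0. depth D0 > 0 \<and> (\<forall>Y. fill G Y = fill G0 (fill D0 Y \<oplus> fsq F))"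
proof (induction G)
  case (Nest D C)
  show ?case
  proof (cases "F \<in># fmls D")
    case True
    obtain fs bs where D: "D = Seq fs bs" by (cases D)
    with True obtain fs' where fs: "fs = add_mset F fs'" by (metis fmls.simps multi_member_split)
    have "fill (Nest D C) Y = fill (Hole emp) (fill (Nest (Seq fs' bs) C) Y \<oplus> fsq F)" for Y
      by (cases "fill C Y") (simp add: D fs fsq_def bsq_def)
    then show ?thesis by (metis depth.simps(2) zero_less_Suc)
  next
    case False
    with Nest obtain G0 D0 where "depth D0 > 0" "\<forall>Y. fill C Y = fill G0 (fill D0 Y \<oplus> fsq F)"
      by auto
    then have "depth D0 > 0 \<and> (\<forall>Y. fill (Nest D C) Y = fill (Nest D G0) (fill D0 Y \<oplus> fsq F))"
      by simp
    then show ?thesis by blast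
  qed
qed simp

section \<open>Kripke semantics and soundness\<close>

primrec sat :: "('w \<Rightarrow> 'w \<Rightarrow> bool) \<Rightarrow> (atom \<Rightarrow> 'w \<Rightarrow> bool) \<Rightarrow> 'w \<Rightarrow> fm \<Rightarrow> bool" where
  "sat R V w (Atm a) = V a w"
| "sat R V w (NAtm a) = (\<not> V a w)"
| "sat R V w (And A B) = (sat R V w A \<and> sat R V w B)"
| "sat R V w (Or A B) = (sat R V w A \<or> sat R V w B)"
| "sat R V w (Box A) = (\<forall>v. R w v \<longrightarrow> sat R V v A)"
| "sat R V w (Dia A) = (\<exists>v. R w v \<and> sat R V v A)"

lemma sat_neg [simp]: "sat R V w (neg A) = (\<not> sat R V w A)"
  by (induction A arbitrary: w) auto

function sat_seq :: "('w \<Rightarrow> 'w \<Rightarrow> bool) \<Rightarrow> (atom \<Rightarrow> 'w \<Rightarrow> bool) \<Rightarrow> 'w \<Rightarrow> seq \<Rightarrow> bool" where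
  "sat_seq R V w (Seq fs bs) \<longleftrightarrow>
     (\<exists>F\<in>#fs. sat R V w F) \<or> (\<exists>c\<in>#bs. \<forall>v. R w v \<longrightarrow> sat_seq R V v c)"
  by pat_completeness auto
termination
  by (relation "measure (\<lambda>(R, V, w, s). size s)") (auto intro: less_size_multiset_if_mem)

declare sat_seq.simps [simp del]

lemma sat_seq_juxt [simp]: "sat_seq R V w (X \<oplus> Y) \<longleftrightarrow> sat_seq R V w X \<or> sat_seq R V w Y"
  by (cases X; cases Y) (auto simp: sat_seq.simps)

lemma sat_seq_emp [simp]: "\<not> sat_seq R V w emp"
  by (simp add: emp_def sat_seq.simps)

lemma sat_seq_fsq [simp]: "sat_seq R V w (fsq A) = sat R V w A"
  by (simp add: fsq_def sat_seq.simps)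

lemma sat_seq_bsq [simp]: "sat_seq R V w (bsq D) \<longleftrightarrow> (\<forall>v. R w v \<longrightarrow> sat_seq R V v D)"
  by (simp add: bsq_def sat_seq.simps)

lemma sat_seq_fill_and:
  "(\<And>v. sat_seq R V v X \<Longrightarrow> sat_seq R V v Y \<Longrightarrow> sat_seq R V v Z) \<Longrightarrow>
   sat_seq R V w (fill G X) \<Longrightarrow> sat_seq R V w (fill G Y) \<Longrightarrow> sat_seq R V w (fill G Z)"
  by (induction G arbitrary: w) auto

lemma sat_seq_fill_mono:
  "(\<And>v. sat_seq R V v X \<Longrightarrow> sat_seq R V v Z) \<Longrightarrow> sat_seq R V w (fill G X) \<Longrightarrow> sat_seq R V w (fill G Z)"
  using sat_seq_fill_and[of R V X X Z w G] by blast

lemma sat_seq_fill_valid: "(\<And>v. sat_seq R V v X) \<Longrightarrow> sat_seq R V w (fill G X)"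
  by (induction G arbitrary: w) auto

definition GL_frame :: "('w \<Rightarrow> 'w \<Rightarrow> bool) \<Rightarrow> bool" where
  "GL_frame R \<longleftrightarrow> transp R \<and> wfP (\<lambda>x y. R y x)"

text \<open>Loeb's principle: a refutation of \<open>A\<close> above \<open>w\<close> can be pushed to an \<open>R\<close>-maximal one,
  which has no refuting successor.\<close>

lemma GL_frame_sat_seq_loeb:
  assumes "GL_frame R" "sat_seq R V w (bsq (fsq (Dia (neg A)) \<oplus> fsq A))"
  shows "sat_seq R V w (bsq (fsq A))"
proof (rule ccontr)
  have wf: "wfP (\<lambda>x y. R y x)" and tr: "transp R" using assms(1) by (auto simp: GL_frame_def)
  assume "\<not> ?thesis"
  then obtain v0 where "R w v0" "\<not> sat R V v0 A" by auto
  then obtain v where v: "R w v" "\<not> sat R V v A" and min: "\<And>u. R v u \<Longrightarrow> \<not> (R w u \<and> \<not> sat R V u A)"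
    using wfE_min[OF wf[unfolded wfp_def], of v0 "{v. R w v \<and> \<not> sat R V v A}"] by auto
  from assms(2) v obtain u where "R v u" "\<not> sat R V u A" by auto
  moreover have "R w u" using v \<open>R v u\<close> tr by (meson transpE)
  ultimately show False using min by blast
qed

lemma sat_seq_dia_below:
  assumes "transp R" "\<forall>u. R w u \<longrightarrow> \<not> sat R V u A" "R w w'" "sat_seq R V w' (fill D (fsq A))"
  shows "sat_seq R V w' (fill D emp)"
  using assms(3,4) by (induction D arbitrary: w') (use assms(1,2) in \<open>auto dest: transpD\<close>)

lemma sat_seq_diaR:
  assumes "transp R" "depth D > 0" "sat_seq R V w (fill D (fsq A) \<oplus> fsq (Dia A))"
  shows "sat_seq R V w (fill D emp \<oplus> fsq (Dia A))"
proof (cases D)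
  case (Nest E C)
  show ?thesis
  proof (cases "sat R V w (Dia A)")
    case False
    then have "\<forall>u. R w u \<longrightarrow> \<not> sat R V u A" by auto
    then show ?thesis using assms(3) Nest sat_seq_dia_below[OF assms(1)] by auto
  qed simp
qed (use assms(2) in simp)

lemma deriv_sound: "deriv Cs S \<Longrightarrow> GL_frame R \<Longrightarrow> sat_seq R V w S"
proof (induction arbitrary: w rule: deriv.induct)
  case (ax G a)
  show ?case by (rule sat_seq_fill_valid) auto
next
  case (andR G A B)
  show ?case by (rule sat_seq_fill_and[of R V "fsq A" "fsq B"]) (use andR in simp_all)
next
  case (orR G A B)
  show ?case by (rule sat_seq_fill_mono[of R V "fsq A \<oplus> fsq B"]) (use orR in simp_all)
next
  case (boxR G A)
  show ?case
    by (rule sat_seq_fill_mono[OF _ boxR.IH[OF boxR.prems]])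
      (metis GL_frame_sat_seq_loeb boxR.prems sat.simps(5) sat_seq_bsq sat_seq_fsq)
next
  case (diaR D G A)
  have "transp R" using diaR.prems by (simp add: GL_frame_def)
  then show ?case
    by (rule sat_seq_fill_mono[OF sat_seq_diaR diaR.IH[OF diaR.prems]]) (use diaR.hyps in simp_all)
next
  case (cut A G)
  show ?case by (rule sat_seq_fill_and[of R V "fsq A" "fsq (neg A)"]) (use cut in simp_all)
qed

section \<open>Derived rules\<close>

lemma deriv_mono: "deriv Cs S \<Longrightarrow> Cs \<subseteq> Cs' \<Longrightarrow> deriv Cs' S"
  by (induction rule: deriv.induct) (auto intro: deriv.intros)

lemma fill_node_fm: "fill G (Seq (add_mset F fs) bs) = fill (ctx_comp G (Hole (Seq fs bs))) (fsq F)"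
  by (simp add: fill_ctx_comp fsq_def)

lemma fill_node_child: "fill G (Seq fs (add_mset c bs)) = fill (ctx_comp G (Nest (Seq fs bs) (Hole emp))) c"
  by (simp add: fill_ctx_comp bsq_def)

lemma deriv_ax_node: "deriv Cs (fill G (Seq (add_mset (NAtm a) (add_mset (Atm a) fs)) bs))"
  using deriv.ax[of Cs "ctx_comp G (Hole (Seq fs bs))" a]
  by (simp add: fill_ctx_comp fsq_def add_mset_commute)

lemma deriv_and_node:
  "deriv Cs (fill G (Seq (add_mset A fs) bs)) \<Longrightarrow> deriv Cs (fill G (Seq (add_mset B fs) bs))
   \<Longrightarrow> deriv Cs (fill G (Seq (add_mset (And A B) fs) bs))"
  unfolding fill_node_fm by (rule deriv.andR)

lemma deriv_or_node:
  "deriv Cs (fill G (Seq (add_mset A (add_mset B fs)) bs)) \<Longrightarrow> deriv Cs (fill G (Seq (add_mset (Or A B) fs) bs))"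
  using deriv.orR[of Cs "ctx_comp G (Hole (Seq fs bs))" A B]
  by (simp add: fill_ctx_comp fsq_def add_mset_commute)

lemma deriv_box_node:
  "deriv Cs (fill G (Seq fs (add_mset (Seq {#Dia (neg A), A#} {#}) bs)))
   \<Longrightarrow> deriv Cs (fill G (Seq (add_mset (Box A) fs) bs))"
  using deriv.boxR[of Cs "ctx_comp G (Hole (Seq fs bs))" A]
  by (simp add: fill_ctx_comp fsq_def bsq_def add_mset_commute)

lemma deriv_dia_node_child:
  "deriv Cs (fill G (Seq (add_mset (Dia A) fs) (add_mset (Seq (add_mset A cf) cb) bs)))
   \<Longrightarrow> deriv Cs (fill G (Seq (add_mset (Dia A) fs) (add_mset (Seq cf cb) bs)))"
  using deriv.diaR[of "Nest (Seq fs bs) (Hole (Seq cf cb))" Cs G A]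
  by (simp add: fsq_def bsq_def emp_def)

lemma deriv_dia_anc:
  assumes "Dia A \<in> anc G" "deriv Cs (fill G (fill D (fsq A)))"
  shows "deriv Cs (fill G (fill D emp))"
proof -
  obtain G0 D0 where D0: "depth D0 > 0" "\<forall>Y. fill G Y = fill G0 (fill D0 Y \<oplus> fsq (Dia A))"
    using anc_decompose[OF assms(1)] by blast
  have "depth (ctx_comp D0 D) > 0" using D0(1) by (simp add: depth_ctx_comp)
  from deriv.diaR[OF this] show ?thesis using assms(2) D0(2) by (simp add: fill_ctx_comp)
qed

lemma deriv_dia_anc_node:
  "Dia A \<in> anc G \<Longrightarrow> deriv Cs (fill G (Seq (add_mset A fs) bs)) \<Longrightarrow> deriv Cs (fill G (Seq fs bs))"
  using deriv_dia_anc[of A G Cs "Hole (Seq fs bs)"] by (simp add: fsq_def)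

lemma deriv_dia_anc_child:
  "Dia A \<in> anc G \<Longrightarrow> deriv Cs (fill G (Seq fs (add_mset (Seq (add_mset A cf) cb) bs)))
   \<Longrightarrow> deriv Cs (fill G (Seq fs (add_mset (Seq cf cb) bs)))"
  using deriv_dia_anc[of A G Cs "Nest (Seq fs bs) (Hole (Seq cf cb))"] by (simp add: fsq_def bsq_def)

lemma neg_neg [simp]: "neg (neg A) = A"
  by (induction A) auto

lemma deriv_identity: "deriv Cs (fill G (Seq (add_mset (neg B) (add_mset B fs)) bs))"
proof (induction B arbitrary: G fs bs)
  case (Atm a)
  show ?case by (simp add: deriv_ax_node)
next
  case (NAtm a)
  show ?case using deriv_ax_node[of Cs G a fs bs] by (simp add: add_mset_commute)
next
  case (And A B)
  have "deriv Cs (fill G (Seq (add_mset A (add_mset (Or (neg A) (neg B)) fs)) bs))"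
    using deriv_or_node[of Cs G "neg A" "neg B" "add_mset A fs" bs] And.IH(1)[of G "add_mset (neg B) fs" bs]
    by (simp add: add_mset_commute)
  moreover have "deriv Cs (fill G (Seq (add_mset B (add_mset (Or (neg A) (neg B)) fs)) bs))"
    using deriv_or_node[of Cs G "neg A" "neg B" "add_mset B fs" bs] And.IH(2)[of G "add_mset (neg A) fs" bs]
    by (simp add: add_mset_commute)
  ultimately show ?case using deriv_and_node by (simp add: add_mset_commute)
next
  case (Or A B)
  have "deriv Cs (fill G (Seq (add_mset (neg B) (add_mset A (add_mset B fs))) bs))"
    using Or.IH(2)[of G "add_mset A fs" bs] by (simp add: add_mset_commute)
  with Or.IH(1) have "deriv Cs (fill G (Seq (add_mset (And (neg A) (neg B)) (add_mset A (add_mset B fs))) bs))"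
    by (rule deriv_and_node)
  then show ?case using deriv_or_node[of Cs G A B "add_mset (And (neg A) (neg B)) fs" bs]
    by (simp add: add_mset_commute)
next
  case (Box A)
  have "deriv Cs (fill G (Seq (add_mset (Dia (neg A)) fs) (add_mset (Seq {#neg A, Dia (neg A), A#} {#}) bs)))"
    using Box.IH[of "ctx_comp G (Nest (Seq (add_mset (Dia (neg A)) fs) bs) (Hole emp))" "{#Dia (neg A)#}" "{#}"]
    unfolding fill_node_child by (simp add: add_mset_commute)
  then have "deriv Cs (fill G (Seq (add_mset (Dia (neg A)) fs) (add_mset (Seq {#Dia (neg A), A#} {#}) bs)))"
    by (rule deriv_dia_node_child)
  then show ?case using deriv_box_node[of Cs G "add_mset (Dia (neg A)) fs" A bs] by (simp add: add_mset_commute)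
next
  case (Dia A)
  have "deriv Cs (fill G (Seq (add_mset (Dia A) fs) (add_mset (Seq {#A, Dia A, neg A#} {#}) bs)))"
    using Dia.IH[of "ctx_comp G (Nest (Seq (add_mset (Dia A) fs) bs) (Hole emp))" "{#Dia A#}" "{#}"]
    unfolding fill_node_child by (simp add: add_mset_commute)
  then have "deriv Cs (fill G (Seq (add_mset (Dia A) fs) (add_mset (Seq {#Dia A, neg A#} {#}) bs)))"
    by (rule deriv_dia_node_child)
  then show ?case using deriv_box_node[of Cs G "add_mset (Dia A) fs" "neg A" bs] by (simp add: add_mset_commute)
qed

text \<open>A box whose \<open>\<diamond>\<close>-dual already occurs at the node or above it closes immediately: the
  new bracket inherits \<open>\<not>A\<close> from that diamond and is then an identity.\<close>

lemma deriv_box_dia_anc: "Dia (neg A) \<in> anc G \<Longrightarrow> deriv Cs (fill G (Seq (add_mset (Box A) fs) bs))"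
  using deriv_identity[of Cs "ctx_comp G (Nest (Seq fs bs) (Hole emp))" A "{#Dia (neg A)#}" "{#}"]
    deriv_dia_anc_child[of "neg A" G Cs fs "{#Dia (neg A), A#}" "{#}" bs]
  by (simp add: fill_node_child add_mset_commute deriv_box_node)

lemma deriv_box_dia_node: "deriv Cs (fill G (Seq (add_mset (Box A) (add_mset (Dia (neg A)) fs)) bs))"
  using deriv_identity[of Cs "ctx_comp G (Nest (Seq (add_mset (Dia (neg A)) fs) bs) (Hole emp))" A "{#Dia (neg A)#}" "{#}"]
    deriv_dia_node_child[of Cs G "neg A" fs "{#Dia (neg A), A#}" "{#}" bs]
  by (simp add: fill_node_child add_mset_commute deriv_box_node)

section \<open>Closure sets\<close>

function fms :: "seq \<Rightarrow> fm set" where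
  "fms (Seq fs bs) = set_mset fs \<union> (\<Union>c\<in>set_mset bs. fms c)"
  by pat_completeness auto
termination
  by (relation "measure size") (auto intro: less_size_multiset_if_mem)

lemma finite_fms: "finite (fms X)"
  by (induction X rule: fms.induct) simp

lemma fms_juxt [simp]: "fms (X \<oplus> Y) = fms X \<union> fms Y"
  by (cases X; cases Y) auto

lemma fms_simps [simp]: "fms emp = {}" "fms (fsq A) = {A}" "fms (bsq D) = fms D"
  by (auto simp: emp_def fsq_def bsq_def)

primrec fms_ctx :: "ctx \<Rightarrow> fm set" where
  "fms_ctx (Hole D) = fms D"
| "fms_ctx (Nest D C) = fms D \<union> fms_ctx C"

lemma fms_fill: "fms (fill G X) = fms_ctx G \<union> fms X"
  by (induction G) auto

lemma anc_subset_fms_ctx: "anc G \<subseteq> fms_ctx G"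
  by (induction G) (auto, metis Un_iff fms.simps fmls.simps seq.exhaust)

definition subformula_closed :: "fm set \<Rightarrow> bool" where
  "subformula_closed Cl \<longleftrightarrow>
     (\<forall>A B. And A B \<in> Cl \<longrightarrow> A \<in> Cl \<and> B \<in> Cl) \<and> (\<forall>A B. Or A B \<in> Cl \<longrightarrow> A \<in> Cl \<and> B \<in> Cl) \<and>
     (\<forall>A. Box A \<in> Cl \<longrightarrow> A \<in> Cl \<and> Dia (neg A) \<in> Cl) \<and> (\<forall>A. Dia A \<in> Cl \<longrightarrow> A \<in> Cl)"

lemma subformula_closedD:
  assumes "subformula_closed Cl"
  shows "And A B \<in> Cl \<Longrightarrow> A \<in> Cl" "And A B \<in> Cl \<Longrightarrow> B \<in> Cl"
    and "Or A B \<in> Cl \<Longrightarrow> A \<in> Cl" "Or A B \<in> Cl \<Longrightarrow> B \<in> Cl"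
    and "Box A \<in> Cl \<Longrightarrow> A \<in> Cl" "Box A \<in> Cl \<Longrightarrow> Dia (neg A) \<in> Cl"
    and "Dia A \<in> Cl \<Longrightarrow> A \<in> Cl"
  using assms unfolding subformula_closed_def by blast+

primrec subfms :: "fm \<Rightarrow> fm set" where
  "subfms (Atm a) = {Atm a}"
| "subfms (NAtm a) = {NAtm a}"
| "subfms (And A B) = insert (And A B) (subfms A \<union> subfms B)"
| "subfms (Or A B) = insert (Or A B) (subfms A \<union> subfms B)"
| "subfms (Box A) = insert (Box A) (subfms A)"
| "subfms (Dia A) = insert (Dia A) (subfms A)"

lemma finite_subfms: "finite (subfms A)"
  by (induction A) auto

lemma subfms_refl: "A \<in> subfms A"
  by (cases A) auto

lemma subfms_trans: "B \<in> subfms A \<Longrightarrow> subfms B \<subseteq> subfms A"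
  by (induction A) auto

lemma subfms_neg: "subfms (neg A) = neg ` subfms A"
  by (induction A) auto

text \<open>Besides subformulas and their negations, the closure contains \<open>\<diamond>\<not>A\<close> for each \<open>\<box>A\<close>,
  since the box rule puts it into the new bracket.\<close>

definition fm_closure :: "fm set \<Rightarrow> fm set" where
  "fm_closure S = (let T = \<Union>(subfms ` S) in T \<union> neg ` T \<union> (\<lambda>B. Dia (neg B)) ` (Box -` T))"

lemma mem_fm_closure:
  "F \<in> fm_closure S \<longleftrightarrow> (\<exists>H\<in>S. F \<in> subfms H \<or> (\<exists>G\<in>subfms H. F = neg G) \<or> (\<exists>B. Box B \<in> subfms H \<and> F = Dia (neg B)))"
  unfolding fm_closure_def Let_def by blast

lemma finite_fm_closure: "finite S \<Longrightarrow> finite (fm_closure S)"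
proof -
  assume "finite S"
  then have T: "finite (\<Union>(subfms ` S))" using finite_subfms by blast
  have "finite (Box -` \<Union>(subfms ` S))" by (rule finite_vimageI[OF T]) (simp add: inj_def)
  then show ?thesis using T unfolding fm_closure_def Let_def by blast
qed

lemma subset_fm_closure: "S \<subseteq> fm_closure S"
  unfolding mem_fm_closure subset_iff using subfms_refl by blast

lemma fm_closure_subfms: "F \<in> fm_closure S \<Longrightarrow> H \<in> subfms F \<Longrightarrow> H \<in> fm_closure S"
proof -
  assume F: "F \<in> fm_closure S" and H: "H \<in> subfms F"
  then obtain K where K: "K \<in> S" and "F \<in> subfms K \<or> (\<exists>G\<in>subfms K. F = neg G) \<or> (\<exists>B. Box B \<in> subfms K \<and> F = Dia (neg B))"
    unfolding mem_fm_closure by blast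
  then consider (sub) "F \<in> subfms K" | (neg) G where "G \<in> subfms K" "F = neg G"
    | (box) B where "Box B \<in> subfms K" "F = Dia (neg B)"
    by blast
  then show ?thesis
  proof cases
    case sub
    then show ?thesis using H K subfms_trans unfolding mem_fm_closure by blast
  next
    case neg
    then obtain H' where "H' \<in> subfms G" "H = neg H'" using H by (auto simp: subfms_neg)
    then show ?thesis using neg(1) K subfms_trans unfolding mem_fm_closure by blast
  next
    case box
    show ?thesis
    proof (cases "H = F")
      case False
      then obtain H' where "H' \<in> subfms B" "H = neg H'" using H box(2) by (auto simp: subfms_neg)
      moreover have "subfms B \<subseteq> subfms K" using subfms_trans[OF box(1)] by auto
      ultimately show ?thesis using K unfolding mem_fm_closure by blast
    qed (use F in simp)
  qed
qed

lemma Dia_neg_mem_fm_closure: "Box A \<in> fm_closure S \<Longrightarrow> Dia (neg A) \<in> fm_closure S"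
proof -
  assume "Box A \<in> fm_closure S"
  then obtain K where K: "K \<in> S" and "Box A \<in> subfms K \<or> (\<exists>G\<in>subfms K. Box A = neg G)"
    unfolding mem_fm_closure by blast
  moreover have "Box A = neg G \<Longrightarrow> G = Dia (neg A)" for G
    by (cases G) auto
  ultimately show ?thesis unfolding mem_fm_closure by auto
qed

lemma subformula_closed_fm_closure: "subformula_closed (fm_closure S)"
  unfolding subformula_closed_def
  by (auto intro: Dia_neg_mem_fm_closure fm_closure_subfms simp: subfms_refl)

section \<open>The countermodel on a saturated tree\<close>

text \<open>\<open>covered F X\<close>: the decomposition of \<open>F\<close> has been carried out at the root of \<open>X\<close>, so
  that \<open>F\<close> fails there once \<open>X\<close> is saturated.\<close>

primrec covered :: "fm \<Rightarrow> seq \<Rightarrow> bool" where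
  "covered (Atm a) X \<longleftrightarrow> Atm a \<in># fmls X"
| "covered (NAtm a) X \<longleftrightarrow> NAtm a \<in># fmls X"
| "covered (And A B) X \<longleftrightarrow> And A B \<in># fmls X \<or> covered A X \<or> covered B X"
| "covered (Or A B) X \<longleftrightarrow> Or A B \<in># fmls X \<or> covered A X \<and> covered B X"
| "covered (Box A) X \<longleftrightarrow> Box A \<in># fmls X \<or> (\<exists>c\<in>#brs X. covered A c)"
| "covered (Dia A) X \<longleftrightarrow> Dia A \<in># fmls X"

lemma covered_if_mem: "F \<in># fmls X \<Longrightarrow> covered F X"
  by (cases F) auto

lemma covered_trans:
  "\<forall>F\<in>#fmls X. covered F Y \<Longrightarrow> brs X \<subseteq># brs Y \<Longrightarrow> covered F X \<Longrightarrow> covered F Y"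
  by (induction F) (auto dest: mset_subset_eqD)

fun lit_or_dia :: "fm \<Rightarrow> bool" where
  "lit_or_dia (Atm a) = True"
| "lit_or_dia (NAtm a) = True"
| "lit_or_dia (Dia A) = True"
| "lit_or_dia _ = False"

definition locally_saturated :: "seq \<Rightarrow> bool" where
  "locally_saturated X \<longleftrightarrow> (\<forall>F\<in>#fmls X. lit_or_dia F) \<and> (\<forall>a. \<not> (Atm a \<in># fmls X \<and> NAtm a \<in># fmls X))"

text \<open>In \<open>saturated D X\<close>, \<open>D\<close> collects the formulas at the ancestors of the root of \<open>X\<close>.\<close>

function saturated :: "fm set \<Rightarrow> seq \<Rightarrow> bool" where
  "saturated D (Seq fs bs) \<longleftrightarrow> locally_saturated (Seq fs bs) \<and>
     (\<forall>B. Dia B \<in> D \<longrightarrow> covered B (Seq fs bs)) \<and> (\<forall>c\<in>#bs. saturated (D \<union> set_mset fs) c)"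
  by pat_completeness auto
termination
  by (relation "measure (\<lambda>(D, X). size X)") (auto intro: less_size_multiset_if_mem)

lemma saturated_anti_mono: "saturated D' X \<Longrightarrow> D \<subseteq> D' \<Longrightarrow> saturated D X"
proof (induction X arbitrary: D D')
  case (Seq fs bs)
  then show ?case by (simp (no_asm_use)) (meson Un_mono order_refl subsetD)
qed

lemma saturated_lit_or_dia: "saturated D X \<Longrightarrow> F \<in># fmls X \<Longrightarrow> lit_or_dia F"
  by (cases X) (simp add: locally_saturated_def)

function embeds :: "seq \<Rightarrow> seq \<Rightarrow> bool" where
  "embeds (Seq fs bs) Y \<longleftrightarrow> (\<forall>F\<in>#fs. covered F Y) \<and> (\<forall>c\<in>#bs. \<exists>c'\<in>#brs Y. embeds c c')"
  by pat_completeness auto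
termination
  by (relation "measure (\<lambda>(X, Y). size X)") (auto intro: less_size_multiset_if_mem)

lemma embeds_fmls: "embeds X Y \<Longrightarrow> F \<in># fmls X \<Longrightarrow> covered F Y"
  and embeds_brs: "embeds X Y \<Longrightarrow> c \<in># brs X \<Longrightarrow> \<exists>c'\<in>#brs Y. embeds c c'"
  by (cases X; auto)+

lemma embeds_covered: "embeds X Y \<Longrightarrow> covered F X \<Longrightarrow> covered F Y"
proof (induction F arbitrary: X Y)
  case (Box A)
  show ?case
  proof (cases "Box A \<in># fmls X")
    case False
    then obtain c where c: "c \<in># brs X" "covered A c" using Box.prems by auto
    then obtain c' where "c' \<in># brs Y" "embeds c c'" using Box.prems embeds_brs by blast
    then show ?thesis using Box.IH c by auto
  qed (use Box.prems embeds_fmls in blast)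
qed (auto dest: embeds_fmls)

function desc :: "seq \<Rightarrow> seq \<Rightarrow> bool" where
  "desc (Seq fs bs) y \<longleftrightarrow> (\<exists>c\<in>#bs. y = c \<or> desc c y)"
  by pat_completeness auto
termination
  by (relation "measure (\<lambda>(x, y). size x)") (auto intro: less_size_multiset_if_mem)

definition countermodel_val :: "atom \<Rightarrow> seq \<Rightarrow> bool" where
  "countermodel_val a y \<longleftrightarrow> NAtm a \<in># fmls y"

lemma desc_size: "desc x y \<Longrightarrow> size y < size x"
  by (induction x y rule: desc.induct) (fastforce dest: size_less_if_branch)

lemma desc_trans: "desc x y \<Longrightarrow> desc y z \<Longrightarrow> desc x z"
  by (induction x y rule: desc.induct) auto

lemma GL_frame_desc: "GL_frame desc"
proof -
  have "wfP (\<lambda>x y. size x < size y)" by (simp add: wfp_if_convertible_to_nat)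
  then have "wfP (\<lambda>x y. desc y x)" by (rule wfp_subset) (auto intro: desc_size)
  then show ?thesis by (auto simp: GL_frame_def intro: transpI desc_trans)
qed

lemma saturated_desc:
  "saturated D x \<Longrightarrow> desc x y \<Longrightarrow> \<exists>D'. D \<union> set_mset (fmls x) \<subseteq> D' \<and> saturated D' y"
proof (induction x arbitrary: D)
  case (Seq fs bs)
  then obtain c where c: "c \<in># bs" "y = c \<or> desc c y" by auto
  have sc: "saturated (D \<union> set_mset fs) c" using Seq.prems(1) c(1) by simp
  show ?case
  proof (cases "y = c")
    case False
    then have "desc c y" using c(2) by simp
    from Seq.IH[OF c(1) sc this] show ?thesis by auto
  qed (use sc in auto)
qed

lemma saturated_covered_not_sat: "saturated D x \<Longrightarrow> covered F x \<Longrightarrow> \<not> sat desc countermodel_val x F"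
proof (induction F arbitrary: x D)
  case (Atm a)
  then show ?case by (cases x) (auto simp: locally_saturated_def countermodel_val_def)
next
  case (NAtm a)
  then show ?case by (simp add: countermodel_val_def)
next
  case (And A B)
  then have "And A B \<notin># fmls x" using saturated_lit_or_dia lit_or_dia.simps by blast
  then show ?case using And by auto
next
  case (Or A B)
  then have "Or A B \<notin># fmls x" using saturated_lit_or_dia lit_or_dia.simps by blast
  then show ?case using Or by auto
next
  case (Box A)
  obtain fs bs where x: "x = Seq fs bs" by (cases x)
  have "Box A \<notin># fs" using Box.prems(1) x saturated_lit_or_dia lit_or_dia.simps by fastforce
  then obtain c where c: "c \<in># bs" "covered A c" using Box.prems x by auto
  have "saturated (D \<union> set_mset fs) c" using Box.prems x c by auto
  then show ?case using Box.IH c x by auto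
next
  case (Dia A)
  show ?case
  proof
    assume "sat desc countermodel_val x (Dia A)"
    then obtain v where v: "desc x v" "sat desc countermodel_val v A" by auto
    from saturated_desc[OF Dia.prems(1) v(1)] obtain D' where D': "D \<union> set_mset (fmls x) \<subseteq> D'" "saturated D' v"
      by blast
    then have "covered A v" using Dia.prems(2) by (cases v) auto
    then show False using Dia.IH[OF D'(2)] v(2) by blast
  qed
qed

lemma embeds_not_sat_seq: "embeds X Y \<Longrightarrow> saturated D Y \<Longrightarrow> \<not> sat_seq desc countermodel_val Y X"
proof (induction X arbitrary: Y D)
  case (Seq fs bs)
  obtain gs cs where Y: "Y = Seq gs cs" by (cases Y)
  have "\<exists>v. desc Y v \<and> \<not> sat_seq desc countermodel_val v c" if c: "c \<in># bs" for c
  proof -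
    obtain c' where c': "c' \<in># cs" "embeds c c'" using Seq.prems Y c by auto
    have "saturated (D \<union> set_mset gs) c'" using Seq.prems Y c' by auto
    then show ?thesis using Seq.IH[OF c c'(2)] Y c' by auto
  qed
  then show ?case using Seq.prems saturated_covered_not_sat by (auto simp: sat_seq.simps)
qed

section \<open>Saturating a node\<close>

text \<open>The children a node may acquire while it is saturated: brackets \<open>[\<diamond>\<not>B, B]\<close> created by
  the box rule for a \<open>\<box>B\<close> whose dual \<open>\<diamond>\<not>B\<close> does not yet occur at the node or above.\<close>

definition fresh_box_child :: "fm set \<Rightarrow> ctx \<Rightarrow> seq \<Rightarrow> seq \<Rightarrow> bool" where
  "fresh_box_child Cl G X c \<longleftrightarrow>
     (\<exists>B. c = Seq {#Dia (neg B), B#} {#} \<and> Box B \<in> Cl \<and> Dia (neg B) \<notin> anc G \<and> Dia (neg B) \<notin># fmls X)"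

definition expands :: "fm set \<Rightarrow> ctx \<Rightarrow> seq \<Rightarrow> seq \<Rightarrow> bool" where
  "expands Cl G X Y \<longleftrightarrow> (\<forall>F\<in>#fmls X. covered F Y) \<and> brs X \<subseteq># brs Y \<and>
     (\<forall>B. Dia B \<in># fmls X \<longrightarrow> Dia B \<in># fmls Y) \<and> (\<forall>c\<in>#brs Y - brs X. fresh_box_child Cl G X c)"

lemma expands_refl: "expands Cl G X X"
  by (simp add: expands_def covered_if_mem)

lemma expands_trans:
  assumes "expands Cl G X Y" "expands Cl G Y Z"
  shows "expands Cl G X Z"
proof -
  have XY: "brs X \<subseteq># brs Y" and YZ: "brs Y \<subseteq># brs Z" using assms by (auto simp: expands_def)
  have "c \<in># brs Z - brs Y \<or> c \<in># brs Y - brs X" if "c \<in># brs Z - brs X" for c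
    using that XY YZ unfolding in_diff_count subseteq_mset_def by (metis not_le order_trans)
  then show ?thesis
    using assms covered_trans[OF _ YZ] subset_mset.order_trans[OF XY YZ]
    unfolding expands_def fresh_box_child_def by meson
qed

lemma expands_same_brs:
  "\<forall>F\<in>#fs. covered F (Seq fs' bs) \<Longrightarrow> \<forall>B. Dia B \<in># fs \<longrightarrow> Dia B \<in># fs' \<Longrightarrow> expands Cl G (Seq fs bs) (Seq fs' bs)"
  by (simp add: expands_def)

definition saturates :: "fm set \<Rightarrow> ctx \<Rightarrow> seq \<Rightarrow> seq \<Rightarrow> bool" where
  "saturates Cl G X Y \<longleftrightarrow> expands Cl G X Y \<and> locally_saturated Y \<and> (\<forall>B. Dia B \<in> anc G \<longrightarrow> covered B Y) \<and>
     fms (fill G Y) \<subseteq> Cl \<and> \<not> cutfree (fill G Y)"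

definition uncovered_anc_dias :: "ctx \<Rightarrow> seq \<Rightarrow> nat" where
  "uncovered_anc_dias G X = card {B. Dia B \<in> anc G \<and> \<not> covered B X}"

definition weight :: "fm \<Rightarrow> nat" where
  "weight F = (if lit_or_dia F then 0 else size F)"

definition nonlit_weight :: "seq \<Rightarrow> nat" where
  "nonlit_weight X = (\<Sum>F\<in>#fmls X. weight F)"

lemma finite_uncovered_anc_dias: "finite {B. Dia B \<in> anc G \<and> \<not> covered B X}"
proof -
  have "finite (Dia -` anc G)" by (rule finite_vimageI) (auto simp: finite_anc inj_def)
  then show ?thesis by (rule rev_finite_subset) auto
qed

lemma uncovered_anc_dias_expands: "expands Cl G X Y \<Longrightarrow> uncovered_anc_dias G Y \<le> uncovered_anc_dias G X"
  unfolding uncovered_anc_dias_def expands_def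
  by (rule card_mono[OF finite_uncovered_anc_dias]) (auto dest: covered_trans)

definition expansion_step :: "fm set \<Rightarrow> ctx \<Rightarrow> seq \<Rightarrow> seq \<Rightarrow> bool" where
  "expansion_step Cl G X Y \<longleftrightarrow> expands Cl G X Y \<and> fms (fill G Y) \<subseteq> Cl \<and> \<not> cutfree (fill G Y) \<and>
     (uncovered_anc_dias G Y < uncovered_anc_dias G X \<or> nonlit_weight Y < nonlit_weight X)"

lemma expansion_step_dia_anc:
  assumes Cl: "subformula_closed Cl" "fms (fill G (Seq fs bs)) \<subseteq> Cl" and nd: "\<not> cutfree (fill G (Seq fs bs))"
    and B: "Dia B \<in> anc G" "\<not> covered B (Seq fs bs)"
  shows "expansion_step Cl G (Seq fs bs) (Seq (add_mset B fs) bs)"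
proof -
  let ?Y = "Seq (add_mset B fs) bs"
  have "Dia B \<in> Cl" using Cl(2) B(1) anc_subset_fms_ctx[of G] unfolding fms_fill by blast
  then have "B \<in> Cl" by (rule subformula_closedD(7)[OF Cl(1)])
  have mono: "covered B' ?Y" if "covered B' (Seq fs bs)" for B'
    using covered_trans[of "Seq fs bs" ?Y B'] that by (simp add: covered_if_mem)
  then have "{B'. Dia B' \<in> anc G \<and> \<not> covered B' ?Y} \<subset> {B'. Dia B' \<in> anc G \<and> \<not> covered B' (Seq fs bs)}"
    using B covered_if_mem[of B ?Y] by auto
  then have "uncovered_anc_dias G ?Y < uncovered_anc_dias G (Seq fs bs)"
    unfolding uncovered_anc_dias_def by (rule psubset_card_mono[OF finite_uncovered_anc_dias])
  moreover have "expands Cl G (Seq fs bs) ?Y" by (rule expands_same_brs) (auto simp: covered_if_mem)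
  moreover have "\<not> cutfree (fill G ?Y)" using nd deriv_dia_anc_node[OF B(1)] by blast
  ultimately show ?thesis using Cl(2) \<open>B \<in> Cl\<close> by (simp add: expansion_step_def fms_fill)
qed

lemma expansion_step_and:
  assumes Cl: "subformula_closed Cl" "fms (fill G (Seq (add_mset (And A B) fs) bs)) \<subseteq> Cl"
    and nd: "\<not> cutfree (fill G (Seq (add_mset (And A B) fs) bs))"
  shows "\<exists>Y. expansion_step Cl G (Seq (add_mset (And A B) fs) bs) Y"
proof -
  obtain C where C: "C = A \<or> C = B" "\<not> cutfree (fill G (Seq (add_mset C fs) bs))"
    using nd deriv_and_node[of "{}" G A fs bs B] by blast
  let ?Y = "Seq (add_mset C fs) bs"
  have "And A B \<in> Cl" using Cl(2) by (simp add: fms_fill)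
  then have "C \<in> Cl" using C(1) subformula_closedD(1,2)[OF Cl(1)] by blast
  moreover have ex: "expands Cl G (Seq (add_mset (And A B) fs) bs) ?Y"
    by (rule expands_same_brs) (use C(1) in \<open>auto simp: covered_if_mem\<close>)
  moreover have "weight C < weight (And A B)" using C(1) by (auto simp: weight_def)
  ultimately have "expansion_step Cl G (Seq (add_mset (And A B) fs) bs) ?Y"
    using Cl(2) C(2) by (auto simp: expansion_step_def fms_fill nonlit_weight_def)
  then show ?thesis ..
qed

lemma expansion_step_or:
  assumes Cl: "subformula_closed Cl" "fms (fill G (Seq (add_mset (Or A B) fs) bs)) \<subseteq> Cl"
    and nd: "\<not> cutfree (fill G (Seq (add_mset (Or A B) fs) bs))"
  shows "expansion_step Cl G (Seq (add_mset (Or A B) fs) bs) (Seq (add_mset A (add_mset B fs)) bs)"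
proof -
  let ?Y = "Seq (add_mset A (add_mset B fs)) bs"
  have "Or A B \<in> Cl" using Cl(2) by (simp add: fms_fill)
  then have "A \<in> Cl" "B \<in> Cl" using subformula_closedD(3,4)[OF Cl(1)] by blast+
  moreover have "\<not> cutfree (fill G ?Y)" using nd deriv_or_node[of "{}" G A B fs bs] by blast
  moreover have "expands Cl G (Seq (add_mset (Or A B) fs) bs) ?Y"
    by (rule expands_same_brs) (auto simp: covered_if_mem)
  moreover have "weight A + weight B < weight (Or A B)" by (auto simp: weight_def)
  ultimately show ?thesis using Cl(2) by (auto simp: expansion_step_def fms_fill nonlit_weight_def)
qed

lemma expansion_step_box:
  assumes Cl: "subformula_closed Cl" "fms (fill G (Seq (add_mset (Box A) fs) bs)) \<subseteq> Cl"
    and nd: "\<not> cutfree (fill G (Seq (add_mset (Box A) fs) bs))"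
  shows "expansion_step Cl G (Seq (add_mset (Box A) fs) bs) (Seq fs (add_mset (Seq {#Dia (neg A), A#} {#}) bs))"
proof -
  let ?X = "Seq (add_mset (Box A) fs) bs" and ?c = "Seq {#Dia (neg A), A#} {#}"
  let ?Y = "Seq fs (add_mset ?c bs)"
  have "Dia (neg A) \<notin> anc G" using nd deriv_box_dia_anc[of A G "{}" fs bs] by blast
  moreover have "Dia (neg A) \<notin># fs"
  proof
    assume "Dia (neg A) \<in># fs"
    then obtain fs' where "fs = add_mset (Dia (neg A)) fs'" by (metis multi_member_split)
    then show False using nd deriv_box_dia_node[of "{}" G A fs' bs] by simp
  qed
  moreover have "Box A \<in> Cl" using Cl(2) by (simp add: fms_fill)
  moreover have "A \<in> Cl" "Dia (neg A) \<in> Cl" using calculation(3) subformula_closedD(5,6)[OF Cl(1)] by blast+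
  ultimately have "fresh_box_child Cl G ?X ?c" by (auto simp: fresh_box_child_def)
  then have "expands Cl G ?X ?Y" by (auto simp: expands_def covered_if_mem add_mset_commute)
  moreover have "\<not> cutfree (fill G ?Y)" using nd deriv_box_node[of "{}" G fs A bs] by blast
  ultimately show ?thesis using Cl \<open>A \<in> Cl\<close> \<open>Dia (neg A) \<in> Cl\<close>
    by (auto simp: expansion_step_def fms_fill nonlit_weight_def weight_def)
qed

lemma expansion_step_exists:
  assumes Cl: "subformula_closed Cl" "fms (fill G X) \<subseteq> Cl" and nd: "\<not> cutfree (fill G X)"
    and unsat: "\<not> (locally_saturated X \<and> (\<forall>B. Dia B \<in> anc G \<longrightarrow> covered B X))"
  shows "\<exists>Y. expansion_step Cl G X Y"
proof -
  obtain fs bs where X: "X = Seq fs bs" by (cases X)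
  consider (dia) B where "Dia B \<in> anc G" "\<not> covered B X" | (nonlit) F where "F \<in># fs" "\<not> lit_or_dia F"
    | (clash) a where "Atm a \<in># fs" "NAtm a \<in># fs"
    using unsat X by (auto simp: locally_saturated_def)
  then show ?thesis
  proof cases
    case dia
    then show ?thesis using expansion_step_dia_anc Cl nd X by blast
  next
    case nonlit
    then obtain fs' where fs: "fs = add_mset F fs'" by (metis multi_member_split)
    consider A B where "F = And A B" | A B where "F = Or A B" | A where "F = Box A"
      using nonlit(2) by (cases F) auto
    then show ?thesis
    proof cases
      case 1
      show ?thesis using expansion_step_and Cl nd unfolding X fs 1 by blast
    next
      case 2
      show ?thesis using expansion_step_or Cl nd unfolding X fs 2 by blast
    next
      case 3
      show ?thesis using expansion_step_box Cl nd unfolding X fs 3 by blast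
    qed
  next
    case clash
    then obtain fs' where "fs = add_mset (NAtm a) (add_mset (Atm a) fs')"
      by (metis insert_noteq_member fm.distinct(1) multi_member_split)
    then show ?thesis using nd deriv_ax_node[of "{}" G a fs' bs] X by simp
  qed
qed

lemma lex_measure_induct:
  fixes f g :: "'a \<Rightarrow> 'b \<Rightarrow> nat"
  assumes "\<And>x y. (\<And>x' y'. f x' y' < f x y \<or> f x' y' = f x y \<and> g x' y' < g x y \<Longrightarrow> P x' y') \<Longrightarrow> P x y"
  shows "P x y"
proof -
  have wf: "wf (inv_image (less_than <*lex*> less_than) (\<lambda>(x, y). (f x y, g x y)))" by auto
  have "P (fst p) (snd p)" for p
    by (rule wf_induct_rule[OF wf]) (rule assms, fastforce)
  then show ?thesis by (metis fst_conv snd_conv)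
qed

lemma saturation_exists:
  assumes "subformula_closed Cl"
  shows "fms (fill G X) \<subseteq> Cl \<Longrightarrow> \<not> cutfree (fill G X) \<Longrightarrow> \<exists>Y. saturates Cl G X Y"
proof (induction G X rule: lex_measure_induct[of uncovered_anc_dias "\<lambda>_. nonlit_weight"])
  case (1 G X)
  show ?case
  proof (cases "locally_saturated X \<and> (\<forall>B. Dia B \<in> anc G \<longrightarrow> covered B X)")
    case True
    then have "saturates Cl G X X" using "1.prems" expands_refl by (simp add: saturates_def)
    then show ?thesis ..
  next
    case False
    then obtain Y where "expansion_step Cl G X Y" using expansion_step_exists assms "1.prems" by blast
    then have step: "expands Cl G X Y" "fms (fill G Y) \<subseteq> Cl" "\<not> cutfree (fill G Y)"
      and dec: "uncovered_anc_dias G Y < uncovered_anc_dias G X \<or> nonlit_weight Y < nonlit_weight X"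
      by (simp_all add: expansion_step_def)
    have "uncovered_anc_dias G Y \<le> uncovered_anc_dias G X" by (rule uncovered_anc_dias_expands[OF step(1)])
    with dec have "uncovered_anc_dias G Y < uncovered_anc_dias G X \<or>
        uncovered_anc_dias G Y = uncovered_anc_dias G X \<and> nonlit_weight Y < nonlit_weight X"
      by linarith
    then obtain Z where "saturates Cl G Y Z" using "1.IH" step(2,3) by blast
    then have "saturates Cl G X Z" using expands_trans[OF step(1)] by (simp add: saturates_def)
    then show ?thesis ..
  qed
qed

section \<open>Completeness\<close>

definition child_ctx :: "ctx \<Rightarrow> seq \<Rightarrow> seq \<Rightarrow> ctx" where
  "child_ctx G Y c = ctx_comp G (Nest (Seq (fmls Y) (brs Y - {#c#})) (Hole emp))"

lemma fill_child_ctx: "c \<in># brs Y \<Longrightarrow> fill (child_ctx G Y c) c = fill G Y"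
  by (cases Y) (simp add: child_ctx_def fill_ctx_comp bsq_def)

lemma anc_child_ctx: "anc G \<union> set_mset (fmls Y) \<subseteq> anc (child_ctx G Y c)"
  using anc_ctx_comp_Nest[of G "Seq (fmls Y) (brs Y - {#c#})" "Hole emp"] by (simp add: child_ctx_def)

definition unblocked_boxes :: "fm set \<Rightarrow> fm set \<Rightarrow> nat" where
  "unblocked_boxes Cl S = card {B. Box B \<in> Cl \<and> Dia (neg B) \<notin> S}"

lemma finite_unblocked_boxes: "finite Cl \<Longrightarrow> finite {B. Box B \<in> Cl \<and> Dia (neg B) \<notin> S}"
proof -
  assume "finite Cl"
  then have "finite (Box -` Cl)" by (rule finite_vimageI) (auto simp: inj_def)
  then show ?thesis by (rule rev_finite_subset) auto
qed

text \<open>Old children are smaller than their parent; a fresh child \<open>[\<diamond>\<not>B, B]\<close> blocks the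
  box \<open>\<box>B\<close> for good.\<close>

lemma child_measure_decreases:
  assumes fin: "finite Cl" and ex: "expands Cl G X Y" and c: "c \<in># brs Y"
  defines "m G' X' \<equiv> unblocked_boxes Cl (anc G' \<union> set_mset (fmls X'))"
  shows "m (child_ctx G Y c) c < m G X \<or> m (child_ctx G Y c) c = m G X \<and> size c < size X"
proof -
  let ?S = "{B. Box B \<in> Cl \<and> Dia (neg B) \<notin> anc (child_ctx G Y c) \<union> set_mset (fmls c)}"
  let ?T = "{B. Box B \<in> Cl \<and> Dia (neg B) \<notin> anc G \<union> set_mset (fmls X)}"
  have ST: "?S \<subseteq> ?T" using anc_child_ctx[of G Y c] ex by (auto simp: expands_def)
  show ?thesis
  proof (cases "c \<in># brs X")
    case True
    then have "size c < size X" by (cases X) (simp add: less_size_multiset_if_mem)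
    moreover have "m (child_ctx G Y c) c \<le> m G X"
      unfolding m_def unblocked_boxes_def by (rule card_mono[OF finite_unblocked_boxes[OF fin] ST])
    ultimately show ?thesis by linarith
  next
    case False
    then have "c \<in># brs Y - brs X" using c by (simp add: in_diff_count not_in_iff)
    then obtain B where "c = Seq {#Dia (neg B), B#} {#}" "B \<in> ?T"
      using ex by (auto simp: expands_def fresh_box_child_def)
    then have "?S \<subset> ?T" using ST by auto
    then have "m (child_ctx G Y c) c < m G X"
      unfolding m_def unblocked_boxes_def by (rule psubset_card_mono[OF finite_unblocked_boxes[OF fin]])
    then show ?thesis ..
  qed
qed

lemma saturates_embeds:
  assumes N: "saturates Cl G X Y"
    and f: "\<And>c. c \<in># brs Y \<Longrightarrow> embeds c (f c) \<and> saturated (anc G \<union> set_mset (fmls Y)) (f c)"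
  shows "embeds X (Seq (fmls Y) (image_mset f (brs Y))) \<and> saturated (anc G) (Seq (fmls Y) (image_mset f (brs Y)))"
proof -
  let ?Z = "Seq (fmls Y) (image_mset f (brs Y))"
  have YZ: "embeds Y ?Z" using f by (cases Y) (auto simp: covered_if_mem)
  have "brs X \<subseteq># brs Y" "\<forall>F\<in>#fmls X. covered F Y" using N by (auto simp: saturates_def expands_def)
  then have "embeds X ?Z" using f embeds_covered[OF YZ] by (cases X) (auto dest: mset_subset_eqD)
  moreover have "saturated (anc G) ?Z"
    using N f embeds_covered[OF YZ] by (auto simp: saturates_def locally_saturated_def)
  ultimately show ?thesis ..
qed

lemma saturated_embedding_exists:
  assumes Cl: "subformula_closed Cl" "finite Cl"
  shows "fms (fill G X) \<subseteq> Cl \<Longrightarrow> \<not> cutfree (fill G X) \<Longrightarrow> \<exists>Z. embeds X Z \<and> saturated (anc G) Z"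
proof (induction G X rule: lex_measure_induct[of "\<lambda>G X. unblocked_boxes Cl (anc G \<union> set_mset (fmls X))" "\<lambda>_. size"])
  case (1 G X)
  obtain Y where N: "saturates Cl G X Y" using saturation_exists[OF Cl(1) "1.prems"] by blast
  have "\<exists>Z. embeds c Z \<and> saturated (anc G \<union> set_mset (fmls Y)) Z" if c: "c \<in># brs Y" for c
  proof -
    have "fms (fill (child_ctx G Y c) c) \<subseteq> Cl" "\<not> cutfree (fill (child_ctx G Y c) c)"
      using N fill_child_ctx[OF c] by (auto simp: saturates_def)
    moreover have "expands Cl G X Y" using N by (simp add: saturates_def)
    ultimately obtain Z where "embeds c Z" "saturated (anc (child_ctx G Y c)) Z"
      using "1.IH" child_measure_decreases[OF Cl(2) _ c] by blast
    then show ?thesis using saturated_anti_mono anc_child_ctx by blast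
  qed
  then obtain f where "\<And>c. c \<in># brs Y \<Longrightarrow> embeds c (f c) \<and> saturated (anc G \<union> set_mset (fmls Y)) (f c)"
    by metis
  then show ?case using saturates_embeds[OF N] by blast
qed

lemma cutfree_complete:
  assumes "\<And>V w. sat_seq desc V w T"
  shows "cutfree T"
proof (rule ccontr)
  assume "\<not> cutfree T"
  then have "\<not> cutfree (fill (Hole emp) T)" by simp
  moreover have "fms (fill (Hole emp) T) \<subseteq> fm_closure (fms T)" by (simp add: subset_fm_closure)
  ultimately obtain Z where "embeds T Z" "saturated {} Z"
    using saturated_embedding_exists[OF subformula_closed_fm_closure finite_fm_closure[OF finite_fms]]
    by (metis anc.simps(1))
  then show False using embeds_not_sat_seq assms by blast
qed

theorem mainTheorem6:
  fixes A :: fm and G :: ctx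
  assumes "cutfree (fill G (bsq (fsq (Dia (neg A)) \<oplus> fsq A)))"
  shows "deriv {A} (fill G (bsq (fsq A)))"
proof -
  have "cutfree (fill G (bsq (fsq A)))"
  proof (rule cutfree_complete)
    fix V w
    have "sat_seq desc V w (fill G (bsq (fsq (Dia (neg A)) \<oplus> fsq A)))"
      using assms GL_frame_desc by (rule deriv_sound)
    then show "sat_seq desc V w (fill G (bsq (fsq A)))"
      using GL_frame_sat_seq_loeb[OF GL_frame_desc] by (rule sat_seq_fill_mono[rotated])
  qed
  then show ?thesis by (rule deriv_mono) simp
qed

end
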